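(* Let $a>0$, $b>2$ with $r:=a+b/2>4$, and let $u_+=1/2+(1/4-1/r)^{1/2}$. Let $(u(t),v(t))$ solve $$u'=(au^2+(b/2)v^2)(1-u)-u,\qquad v'=(av^2+(b/2)u^2)(1-v)-v,$$ with $u(0)=1$, $v(0)=0$. Then $\lim_{t\to\infty}u(t)=\lim_{t\to\infty}v(t)=u_+$. *)

theory Defs
  imports "HOL-Analysis.Analysis"
begin

end

theory Submission
  imports Defs
begin

text \<open>
  Both coordinates stay in [0,1], and sign preservation for linear differential inequalities
  z' >= p z yields the further invariants v <= u and u + v >= 1. With r = a + b/2, the first
  makes the diagonal field w (r w (1 - w) - 1) an upper bound for u' and a lower bound for v';
  this cubic is negative beyond its largest zero u_+ = 1/2 + sqrt (1/4 - 1/r) and positive on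
  (1/2, u_+). So u is eventually below u_+ + \<epsilon>. Below 1/2, the invariant u >= 1 - v keeps
  v' bounded away from 0, so v is eventually above u_+ - \<epsilon>. Since v <= u, both tend to u_+.
\<close>

lemma nonneg_if_deriv_ge_linear:
  fixes z p D :: "real \<Rightarrow> real"
  assumes cont_z: "continuous_on {0..} z" and cont_p: "continuous_on {0..} p"
    and deriv: "\<And>t. 0 < t \<Longrightarrow> (z has_real_derivative D t) (at t)"
    and ineq: "\<And>t. 0 < t \<Longrightarrow> p t * z t \<le> D t"
    and "0 \<le> z 0" and "0 \<le> t"
  shows "0 \<le> z t"
proof -
  define P where "P x = integral {0..x} p" for x
  define E where "E x = z x * exp (- P x)" for x
  have "continuous_on {0..t} p" using continuous_on_subset[OF cont_p] by auto
  then have P_deriv: "(P has_real_derivative p x) (at x within {0..t})" if "x \<in> {0..t}" for x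
    unfolding P_def using integral_has_real_derivative that by blast
  have "E 0 \<le> E t"
  proof (rule DERIV_nonneg_imp_increasing_open[OF \<open>0 \<le> t\<close>])
    fix x assume x: "0 < x" "x < t"
    have "(P has_real_derivative p x) (at x)"
      using P_deriv[of x] x at_within_interior[of x "{0..t}"] by simp
    then have "(E has_real_derivative (D x - p x * z x) * exp (- P x)) (at x)"
      unfolding E_def by (auto intro!: derivative_eq_intros deriv x simp: algebra_simps)
    moreover have "0 \<le> (D x - p x * z x) * exp (- P x)" using ineq[OF x(1)] by simp
    ultimately show "\<exists>y. (E has_real_derivative y) (at x) \<and> 0 \<le> y" by blast
  next
    have "continuous_on {0..t} P" by (rule DERIV_continuous_on[OF P_deriv])
    then show "continuous_on {0..t} E" unfolding E_def
      using continuous_on_subset[OF cont_z] by (auto intro!: continuous_intros)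
  qed
  then have "0 \<le> z t * exp (- P t)" using \<open>0 \<le> z 0\<close> by (simp add: E_def P_def)
  then show ?thesis by (simp add: zero_le_mult_iff)
qed

lemma stays_above_if_deriv_nonneg_below:
  fixes y y' :: "real \<Rightarrow> real"
  assumes "\<alpha> \<le> \<beta>" and cont: "continuous_on {\<alpha>..\<beta>} y"
    and deriv: "\<And>x. \<alpha> < x \<Longrightarrow> x < \<beta> \<Longrightarrow> (y has_real_derivative y' x) (at x)"
    and nonneg: "\<And>x. \<alpha> < x \<Longrightarrow> x < \<beta> \<Longrightarrow> y x < M \<Longrightarrow> 0 \<le> y' x"
    and "M \<le> y \<alpha>"
  shows "M \<le> y \<beta>"
proof (rule ccontr)
  assume below: "\<not> M \<le> y \<beta>"
  define A where "A = {\<alpha>..\<beta>} \<inter> y -` {M..}"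
  have "closed A" unfolding A_def by (rule continuous_closed_preimage[OF cont]) auto
  moreover have "A \<noteq> {}" and "bdd_above A"
    using assms unfolding A_def by (auto intro: bdd_aboveI[of _ \<beta>])
  ultimately have "Sup A \<in> A" and upper: "\<And>x. x \<in> A \<Longrightarrow> x \<le> Sup A"
    by (auto intro: closed_contains_Sup cSup_upper)
  then have s: "\<alpha> \<le> Sup A" "Sup A < \<beta>" "M \<le> y (Sup A)"
    using below unfolding A_def by (auto simp: order.order_iff_strict)
  \<comment> \<open>Past the last time \<open>Sup A\<close> at which \<open>y \<ge> M\<close>, \<open>y\<close> stays below \<open>M\<close> and so cannot decrease.\<close>
  have "y (Sup A) \<le> y \<beta>"
  proof (rule DERIV_nonneg_imp_increasing_open[of "Sup A" \<beta> y])
    fix x assume x: "Sup A < x" "x < \<beta>"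
    then have "y x < M" using upper[of x] s unfolding A_def by force
    then show "\<exists>d. (y has_real_derivative d) (at x) \<and> 0 \<le> d"
      using deriv nonneg x s by (meson order.strict_trans1)
  qed (use s continuous_on_subset[OF cont] in auto)
  then show False using s below by simp
qed

lemma eventually_above_if_deriv_bounded_below:
  fixes y y' :: "real \<Rightarrow> real"
  assumes cont: "continuous_on {0..} y"
    and deriv: "\<And>x. 0 < x \<Longrightarrow> (y has_real_derivative y' x) (at x)"
    and growth: "\<And>x. 0 < x \<Longrightarrow> y x < M \<Longrightarrow> \<kappa> \<le> y' x" and "0 < \<kappa>"
    and bounded: "\<And>x. 0 \<le> x \<Longrightarrow> y x \<le> B"
  shows "eventually (\<lambda>t. M \<le> y t) at_top"
proof -
  obtain T where T: "0 \<le> T" "M \<le> y T"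
  proof (rule ccontr)
    assume "\<not> thesis"
    then have below: "\<And>t. 0 \<le> t \<Longrightarrow> y t < M" using that by force
    define t where "t = (B - y 0 + 1) / \<kappa>"
    have "0 \<le> t" unfolding t_def using bounded[of 0] \<open>0 < \<kappa>\<close> by simp
    have "y 0 - \<kappa> * 0 \<le> y t - \<kappa> * t"
    proof (rule DERIV_nonneg_imp_increasing_open[OF \<open>0 \<le> t\<close>])
      fix x :: real assume x: "0 < x" "x < t"
      have "((\<lambda>x. y x - \<kappa> * x) has_real_derivative y' x - \<kappa>) (at x)"
        by (auto intro!: derivative_eq_intros deriv x(1))
      moreover have "0 \<le> y' x - \<kappa>" using growth[OF x(1) below] x by simp
      ultimately show "\<exists>d. ((\<lambda>x. y x - \<kappa> * x) has_real_derivative d) (at x) \<and> 0 \<le> d"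
        by blast
    qed (use continuous_on_subset[OF cont] in \<open>auto intro!: continuous_intros\<close>)
    moreover have "\<kappa> * t = B - y 0 + 1" unfolding t_def using \<open>0 < \<kappa>\<close> by simp
    ultimately show False using bounded[OF \<open>0 \<le> t\<close>] by simp
  qed
  have "M \<le> y t" if "T \<le> t" for t
  proof (rule stays_above_if_deriv_nonneg_below[where \<alpha> = T and y = y and y' = y'])
    show "continuous_on {T..t} y" using continuous_on_subset[OF cont] T by auto
    fix x assume x: "T < x" "x < t"
    then show "(y has_real_derivative y' x) (at x)" using deriv T by simp
    show "y x < M \<Longrightarrow> 0 \<le> y' x" using growth[of x] x T \<open>0 < \<kappa>\<close> by fastforce
  qed (use that T in auto)
  then show ?thesis by (rule eventually_at_top_linorderI)
qed

definition rate :: "real \<Rightarrow> real \<Rightarrow> real \<Rightarrow> real \<Rightarrow> real" where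
  "rate a c x y = (a * x\<^sup>2 + c * y\<^sup>2) * (1 - x) - x"

lemma rate_mono_right:
  assumes "0 \<le> c" "x \<le> 1" "0 \<le> y" "y \<le> y'"
  shows "rate a c x y \<le> rate a c x y'"
proof -
  have "c * y\<^sup>2 \<le> c * y'\<^sup>2" using assms by (intro mult_left_mono power_mono) auto
  then have "(a * x\<^sup>2 + c * y\<^sup>2) * (1 - x) \<le> (a * x\<^sup>2 + c * y'\<^sup>2) * (1 - x)"
    using assms by (intro mult_right_mono) auto
  then show ?thesis unfolding rate_def by simp
qed

lemma rate_diag: "rate a c w w = w * ((a + c) * w * (1 - w) - 1)"
  by (simp add: rate_def algebra_simps power2_eq_square)

lemma rate_diff_swap:
  "rate a c x y - rate a c y x
     = (a * (x + y - x\<^sup>2 - x * y - y\<^sup>2) - c * (x + y - x * y) - 1) * (x - y)"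
  by (simp add: rate_def algebra_simps power2_eq_square)

text \<open>The remainder after the multiple of \<open>x + y - 1\<close> is nonnegative as soon as
  \<open>\<bar>x - y\<bar> \<le> 1\<close>, \<open>4 \<le> a + c\<close> and \<open>1 \<le> c\<close>.\<close>

lemma rate_sum_swap:
  "4 * (rate a c x y + rate a c y x)
     = (2 * (a + c) * (x + y + 1) - (a + c) * ((x + y)\<^sup>2 + (x + y) + 1)
          + (x - y)\<^sup>2 * (c - 3 * a) - 4) * (x + y - 1)
       + (1 - (x - y)\<^sup>2) * (a + c - 4) + 4 * (x - y)\<^sup>2 * (c - 1)"
  by (simp add: rate_def algebra_simps power2_eq_square)

lemma rate_complement_ge:
  assumes "0 \<le> w" "w \<le> 1/2" "4 \<le> a + c" "1 \<le> c"
  shows "min ((a + c - 4) / 32) ((c - 1) / 4) \<le> rate a c w (1 - w)"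
proof -
  have split: "rate a c w (1 - w)
      = (a + c - 4) * (w\<^sup>2 * (1 - w)) + (c - 1) * ((1 - w) * (1 - 2 * w)) + ((1 - w)^4 - w^4)"
    by (simp add: rate_def algebra_simps power2_eq_square power4_eq_xxxx)
  have "0 \<le> (a + c - 4) * (w\<^sup>2 * (1 - w))" "0 \<le> (c - 1) * ((1 - w) * (1 - 2 * w))"
    using assms by simp_all
  moreover have "0 \<le> (1 - w)^4 - w^4" using assms by (simp add: power_mono)
  moreover consider "w \<le> 1/4" | "1/4 \<le> w" by linarith
  then have "(a + c - 4) / 32 \<le> (a + c - 4) * (w\<^sup>2 * (1 - w))
           \<or> (c - 1) / 4 \<le> (c - 1) * ((1 - w) * (1 - 2 * w))"
  proof cases
    case 1
    have "3/4 * (1/2) \<le> (1 - w) * (1 - 2 * w)" using 1 by (intro mult_mono) auto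
    then have "(c - 1) * (3/8) \<le> (c - 1) * ((1 - w) * (1 - 2 * w))"
      using assms by (intro mult_left_mono) auto
    then show ?thesis using assms by auto
  next
    case 2
    have "(1/4)\<^sup>2 * (1/2) \<le> w\<^sup>2 * (1 - w)"
      using 2 assms by (intro mult_mono power_mono) auto
    then have "(a + c - 4) * (1/32) \<le> (a + c - 4) * (w\<^sup>2 * (1 - w))"
      using assms by (intro mult_left_mono) (auto simp: power2_eq_square)
    then show ?thesis by auto
  qed
  ultimately show ?thesis unfolding split by linarith
qed

lemma logistic_factor:
  fixes r q w :: real
  assumes "r * (1/4 - q\<^sup>2) = 1"
  shows "w * (r * w * (1 - w) - 1) = r * (w * (q\<^sup>2 - (w - 1/2)\<^sup>2))"
proof -
  have "w * (r * w * (1 - w) - 1) = w * (r * w * (1 - w) - r * (1/4 - q\<^sup>2))"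
    by (simp add: assms)
  also have "\<dots> = r * (w * (q\<^sup>2 - (w - 1/2)\<^sup>2))"
    by (simp add: algebra_simps power2_eq_square)
  finally show ?thesis .
qed

lemma logistic_le_beyond_root:
  fixes r q w \<epsilon> :: real
  assumes "0 < r" "r * (1/4 - q\<^sup>2) = 1" "0 \<le> q" "0 < \<epsilon>" "1/2 + q + \<epsilon> \<le> w"
  shows "w * (r * w * (1 - w) - 1) \<le> - (r * \<epsilon>\<^sup>2 / 2)"
proof -
  have "(q + \<epsilon>)\<^sup>2 \<le> (w - 1/2)\<^sup>2" using assms by (intro power_mono) auto
  moreover have "(q + \<epsilon>)\<^sup>2 = q\<^sup>2 + 2 * (q * \<epsilon>) + \<epsilon>\<^sup>2" by (simp add: power2_eq_square algebra_simps)
  moreover have "0 \<le> q * \<epsilon>" using assms by simp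
  ultimately have gap: "q\<^sup>2 - (w - 1/2)\<^sup>2 \<le> - \<epsilon>\<^sup>2" by linarith
  then have "w * (q\<^sup>2 - (w - 1/2)\<^sup>2) \<le> 1/2 * (q\<^sup>2 - (w - 1/2)\<^sup>2)"
    using assms by (intro mult_right_mono_neg) auto
  also have "\<dots> \<le> - (\<epsilon>\<^sup>2 / 2)" using gap by simp
  finally have "r * (w * (q\<^sup>2 - (w - 1/2)\<^sup>2)) \<le> r * - (\<epsilon>\<^sup>2 / 2)"
    using assms(1) by (intro mult_left_mono) auto
  then show ?thesis unfolding logistic_factor[OF assms(2)] by linarith
qed

lemma logistic_ge_before_root:
  fixes r q w e :: real
  assumes "0 < r" "r * (1/4 - q\<^sup>2) = 1" "0 < e" "e \<le> q" "1/2 \<le> w" "w \<le> 1/2 + q - e"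
  shows "r * q * e / 2 \<le> w * (r * w * (1 - w) - 1)"
proof -
  have "(w - 1/2)\<^sup>2 \<le> (q - e)\<^sup>2" using assms by (intro power_mono) auto
  moreover have "(q - e)\<^sup>2 = q\<^sup>2 - q * e - e * (q - e)" by (simp add: power2_eq_square algebra_simps)
  moreover have "0 \<le> e * (q - e)" using assms by simp
  ultimately have "q * e \<le> q\<^sup>2 - (w - 1/2)\<^sup>2" by linarith
  then have "1/2 * (q * e) \<le> w * (q\<^sup>2 - (w - 1/2)\<^sup>2)"
    using assms by (intro mult_mono) auto
  then have "r * (1/2 * (q * e)) \<le> r * (w * (q\<^sup>2 - (w - 1/2)\<^sup>2))"
    using assms(1) by (intro mult_left_mono) auto
  then show ?thesis unfolding logistic_factor[OF assms(2)] by linarith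
qed

lemma unit_interval_invariant:
  fixes x y :: "real \<Rightarrow> real"
  assumes "0 \<le> a" "0 \<le> c" and cont: "continuous_on {0..} x" "continuous_on {0..} y"
    and deriv: "\<And>t. 0 < t \<Longrightarrow> (x has_real_derivative rate a c (x t) (y t)) (at t)"
    and "0 \<le> x 0" "x 0 \<le> 1" "0 \<le> t"
  shows "0 \<le> x t \<and> x t \<le> 1"
proof
  let ?p = "\<lambda>t. - (1 + a * (x t)\<^sup>2 + c * (y t)\<^sup>2)"
  have cont_p: "continuous_on {0..} ?p" using cont by (intro continuous_intros)
  show "0 \<le> x t"
  proof (rule nonneg_if_deriv_ge_linear[OF cont(1) cont_p deriv])
    fix t :: real
    have "0 \<le> a * (x t)\<^sup>2 + c * (y t)\<^sup>2" using assms by simp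
    then show "?p t * x t \<le> rate a c (x t) (y t)" by (simp add: rate_def algebra_simps)
  qed (use assms in auto)
  have "0 \<le> 1 - x t"
  proof (rule nonneg_if_deriv_ge_linear[where z = "\<lambda>t. 1 - x t" and p = ?p])
    show "continuous_on {0..} (\<lambda>t. 1 - x t)" using cont by (intro continuous_intros)
    fix t :: real assume "0 < t"
    then show "((\<lambda>t. 1 - x t) has_real_derivative - rate a c (x t) (y t)) (at t)"
      by (auto intro!: derivative_eq_intros deriv)
    show "?p t * (1 - x t) \<le> - rate a c (x t) (y t)" by (simp add: rate_def algebra_simps)
  qed (use assms cont_p in auto)
  then show "x t \<le> 1" by simp
qed

locale symmetric_system =
  fixes a c :: real and u v :: "real \<Rightarrow> real"
  assumes a_pos: "0 < a" and c_gt_1: "1 < c" and sum_gt_4: "4 < a + c"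
    and u_has_deriv: "\<And>t. 0 \<le> t \<Longrightarrow>
          (u has_real_derivative rate a c (u t) (v t)) (at t within {0..})"
    and v_has_deriv: "\<And>t. 0 \<le> t \<Longrightarrow>
          (v has_real_derivative rate a c (v t) (u t)) (at t within {0..})"
    and u_0: "u 0 = 1" and v_0: "v 0 = 0"
begin

definition q :: real where "q = sqrt (1/4 - 1/(a + c))"

lemma q_pos: "0 < q"
  using sum_gt_4 by (simp add: q_def field_simps)

lemma q_root: "(a + c) * (1/4 - q\<^sup>2) = 1"
  using sum_gt_4 by (simp add: q_def field_simps)

lemma u_deriv: "0 < t \<Longrightarrow> (u has_real_derivative rate a c (u t) (v t)) (at t)"
  using u_has_deriv[of t] at_within_interior[of t "{0..}"] by simp

lemma v_deriv: "0 < t \<Longrightarrow> (v has_real_derivative rate a c (v t) (u t)) (at t)"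
  using v_has_deriv[of t] at_within_interior[of t "{0..}"] by simp

lemma continuous_u: "continuous_on {0..} u"
  using u_has_deriv by (intro DERIV_continuous_on) auto

lemma continuous_v: "continuous_on {0..} v"
  using v_has_deriv by (intro DERIV_continuous_on) auto

lemma u_bounds: "0 \<le> t \<Longrightarrow> 0 \<le> u t \<and> u t \<le> 1"
  using a_pos c_gt_1 u_0
  by (intro unit_interval_invariant[OF _ _ continuous_u continuous_v u_deriv]) auto

lemma v_bounds: "0 \<le> t \<Longrightarrow> 0 \<le> v t \<and> v t \<le> 1"
  using a_pos c_gt_1 v_0
  by (intro unit_interval_invariant[OF _ _ continuous_v continuous_u v_deriv]) auto

lemma v_le_u:
  assumes "0 \<le> t" shows "v t \<le> u t"
proof -
  let ?p = "\<lambda>t. a * (u t + v t - (u t)\<^sup>2 - u t * v t - (v t)\<^sup>2) - c * (u t + v t - u t * v t) - 1"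
  have "0 \<le> u t - v t"
  proof (rule nonneg_if_deriv_ge_linear[where z = "\<lambda>t. u t - v t" and p = ?p])
    show "continuous_on {0..} (\<lambda>t. u t - v t)" "continuous_on {0..} ?p"
      using continuous_u continuous_v by (auto intro!: continuous_intros)
    fix t :: real assume "0 < t"
    then show "((\<lambda>t. u t - v t) has_real_derivative
        rate a c (u t) (v t) - rate a c (v t) (u t)) (at t)"
      by (auto intro!: derivative_eq_intros u_deriv v_deriv)
  qed (use assms u_0 v_0 rate_diff_swap in auto)
  then show ?thesis by simp
qed

lemma one_le_u_plus_v:
  assumes "0 \<le> t" shows "1 \<le> u t + v t"
proof -
  let ?p = "\<lambda>t. (2 * (a + c) * (u t + v t + 1) - (a + c) * ((u t + v t)\<^sup>2 + (u t + v t) + 1)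
                + (u t - v t)\<^sup>2 * (c - 3 * a) - 4) / 4"
  have "0 \<le> u t + v t - 1"
  proof (rule nonneg_if_deriv_ge_linear[where z = "\<lambda>t. u t + v t - 1" and p = ?p])
    show "continuous_on {0..} (\<lambda>t. u t + v t - 1)" "continuous_on {0..} ?p"
      using continuous_u continuous_v by (auto intro!: continuous_intros)
    fix t :: real assume "0 < t"
    then show "((\<lambda>t. u t + v t - 1) has_real_derivative
        rate a c (u t) (v t) + rate a c (v t) (u t)) (at t)"
      by (auto intro!: derivative_eq_intros u_deriv v_deriv)
    have "\<bar>u t - v t\<bar> \<le> 1" using u_bounds[of t] v_bounds[of t] \<open>0 < t\<close> by auto
    then have "(u t - v t)\<^sup>2 \<le> 1" by (simp add: abs_square_le_1)
    then have "0 \<le> (1 - (u t - v t)\<^sup>2) * (a + c - 4) + 4 * (u t - v t)\<^sup>2 * (c - 1)"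
      using sum_gt_4 c_gt_1 by simp
    then show "?p t * (u t + v t - 1) \<le> rate a c (u t) (v t) + rate a c (v t) (u t)"
      using rate_sum_swap[of a c "u t" "v t"] by simp
  qed (use assms u_0 v_0 in auto)
  then show ?thesis by simp
qed

end

context symmetric_system
begin

lemma eventually_u_le:
  assumes "0 < \<epsilon>" shows "eventually (\<lambda>t. u t \<le> 1/2 + q + \<epsilon>) at_top"
proof -
  have "eventually (\<lambda>t. - (1/2 + q + \<epsilon>) \<le> - u t) at_top"
  proof (rule eventually_above_if_deriv_bounded_below
      [where y' = "\<lambda>t. - rate a c (u t) (v t)" and \<kappa> = "(a + c) * \<epsilon>\<^sup>2 / 2" and B = 0])
    show "continuous_on {0..} (\<lambda>t. - u t)" using continuous_u by (intro continuous_intros)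
    show "0 < (a + c) * \<epsilon>\<^sup>2 / 2" using sum_gt_4 assms by simp
    fix t :: real
    show "0 < t \<Longrightarrow> ((\<lambda>t. - u t) has_real_derivative - rate a c (u t) (v t)) (at t)"
      by (auto intro!: derivative_eq_intros u_deriv)
    show "0 \<le> t \<Longrightarrow> - u t \<le> 0" using u_bounds by simp
    assume "0 < t" and "- u t < - (1/2 + q + \<epsilon>)"
    then have "rate a c (u t) (v t) \<le> rate a c (u t) (u t)"
      using c_gt_1 u_bounds[of t] v_bounds[of t] v_le_u[of t] by (intro rate_mono_right) auto
    also have "\<dots> \<le> - ((a + c) * \<epsilon>\<^sup>2 / 2)" unfolding rate_diag
      using sum_gt_4 q_root q_pos assms \<open>- u t < _\<close>
      by (intro logistic_le_beyond_root) auto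
    finally show "(a + c) * \<epsilon>\<^sup>2 / 2 \<le> - rate a c (u t) (v t)" by simp
  qed
  then show ?thesis by eventually_elim linarith
qed

lemma eventually_v_ge:
  assumes "0 < \<epsilon>" shows "eventually (\<lambda>t. 1/2 + q - \<epsilon> \<le> v t) at_top"
proof -
  define e where "e = min \<epsilon> q"
  have e: "0 < e" "e \<le> q" "e \<le> \<epsilon>" using assms q_pos by (auto simp: e_def)
  define \<kappa> where "\<kappa> = min (min ((a + c - 4) / 32) ((c - 1) / 4)) ((a + c) * q * e / 2)"
  have "eventually (\<lambda>t. 1/2 + q - e \<le> v t) at_top"
  proof (rule eventually_above_if_deriv_bounded_below
      [where y' = "\<lambda>t. rate a c (v t) (u t)" and \<kappa> = \<kappa> and B = 1])
    show "0 < \<kappa>" unfolding \<kappa>_def using sum_gt_4 c_gt_1 q_pos e by simp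
    fix t :: real
    assume "0 < t" and below: "v t < 1/2 + q - e"
    have v: "0 \<le> v t" "v t \<le> 1" "v t \<le> u t" "1 - v t \<le> u t"
      using \<open>0 < t\<close> v_bounds v_le_u one_le_u_plus_v by (auto simp: algebra_simps)
    consider "v t \<le> 1/2" | "1/2 \<le> v t" by linarith
    then show "\<kappa> \<le> rate a c (v t) (u t)"
    proof cases
      case 1
      have "min ((a + c - 4) / 32) ((c - 1) / 4) \<le> rate a c (v t) (1 - v t)"
        using 1 v sum_gt_4 c_gt_1 by (intro rate_complement_ge) auto
      also have "\<dots> \<le> rate a c (v t) (u t)" using v c_gt_1 by (intro rate_mono_right) auto
      finally show ?thesis unfolding \<kappa>_def by simp
    next
      case 2
      have "(a + c) * q * e / 2 \<le> rate a c (v t) (v t)" unfolding rate_diag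
        using 2 below sum_gt_4 q_root e by (intro logistic_ge_before_root) auto
      also have "\<dots> \<le> rate a c (v t) (u t)" using v c_gt_1 by (intro rate_mono_right) auto
      finally show ?thesis unfolding \<kappa>_def by simp
    qed
  qed (use continuous_v v_deriv v_bounds in auto)
  then show ?thesis by eventually_elim (use e in linarith)
qed

lemma tendsto_u_v: "(u \<longlongrightarrow> 1/2 + q) at_top \<and> (v \<longlongrightarrow> 1/2 + q) at_top"
proof -
  have squeeze: "eventually (\<lambda>t. 1/2 + q - \<epsilon> \<le> v t \<and> v t \<le> u t \<and> u t \<le> 1/2 + q + \<epsilon>) at_top"
    if "0 < \<epsilon>" for \<epsilon>
    using eventually_v_ge[OF that] eventually_u_le[OF that] eventually_ge_at_top[of 0]
    by eventually_elim (use v_le_u in auto)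
  have "eventually (\<lambda>t. y < v t \<and> y < u t) at_top" if "y < 1/2 + q" for y
  proof -
    have "0 < (1/2 + q - y) / 2" using that by simp
    from squeeze[OF this] show ?thesis by eventually_elim (use that in \<open>auto simp: field_simps\<close>)
  qed
  moreover have "eventually (\<lambda>t. v t < y \<and> u t < y) at_top" if "1/2 + q < y" for y
  proof -
    have "0 < (y - 1/2 - q) / 2" using that by simp
    from squeeze[OF this] show ?thesis by eventually_elim (use that in \<open>auto simp: field_simps\<close>)
  qed
  ultimately show ?thesis
    by (intro conjI order_tendstoI; fastforce elim: eventually_mono)
qed

end

theorem lemma10p1:
  fixes a b :: real and u v :: "real \<Rightarrow> real"
  assumes "a > 0" and "b > 2" and "a + b / 2 > 4"
    and "\<And>t. t \<ge> 0 \<Longrightarrow> (u has_real_derivative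
           ((a * (u t)\<^sup>2 + (b / 2) * (v t)\<^sup>2) * (1 - u t) - u t)) (at t within {0..})"
    and "\<And>t. t \<ge> 0 \<Longrightarrow> (v has_real_derivative
           ((a * (v t)\<^sup>2 + (b / 2) * (u t)\<^sup>2) * (1 - v t) - v t)) (at t within {0..})"
    and "u 0 = 1" and "v 0 = 0"
  shows "(u \<longlongrightarrow> 1 / 2 + sqrt (1 / 4 - 1 / (a + b / 2))) at_top
       \<and> (v \<longlongrightarrow> 1 / 2 + sqrt (1 / 4 - 1 / (a + b / 2))) at_top"
proof -
  interpret symmetric_system a "b / 2" u v
    using assms by unfold_locales (simp_all add: rate_def)
  show ?thesis using tendsto_u_v unfolding q_def .
qed

end
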